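(* Let $p$ be a prime, $s\geq 2$, and $\lambda_i\in\{0,1,\dots,p-1\}$ for $i\in\{0,\dots,s-1\}$. Then $$\phi_s\Big(\sum_{i=0}^{s-1}\lambda_ip^i\Big)=\gamma_s\Big(\Phi_{s-1}\Big(\sum_{i=0}^{s-1}\tau_s(\lambda_ip^i)\Big)\Big),$$ where the inner sum is computed in $\mathbb{Z}_{p^{s-1}}^p$.
   Context: For $r\geq1$ and $u\in\mathbb{Z}_{p^r}$ with $p$-ary expansion $u=\sum_{i=0}^{r-1}u_ip^i$, $\phi_r(u)=(u_{r-1},\dots,u_{r-1})+(u_0,\dots,u_{r-2})Y_{r-1}\in\mathbb{Z}_p^{p^{r-1}}$, where $Y_1=(0\ 1\ \cdots\ p-1)$ and $Y_k$ is the $k\times p^k$ matrix with first $k-1$ rows $(Y_{k-1}\ \cdots\ Y_{k-1})$ ($p$ copies) and last row $(0,\dots,0,1,\dots,1,\dots,p-1,\dots,p-1)$ (blocks of length $p^{k-1}$); $\phi_1=\mathrm{id}$; $\Phi_r:\mathbb{Z}_{p^r}^n\to\mathbb{Z}_p^{np^{r-1}}$ applies $\phi_r$ coordinatewise and concatenates. $\gamma_s$ is the coordinate permutation of $\mathbb{Z}_p^{p^{s-1}}$ given by $\gamma_s(\mathbf{x})_{j+ip+1}=\mathbf{x}_{jp^{s-2}+i+1}$ for $j\in\{0,\dots,p-1\}$, $i\in\{0,\dots,p^{s-2}-1\}$. The map $\tau_s:\mathbb{Z}_{p^s}\to\mathbb{Z}_{p^{s-1}}^p$ is $\tau_s(u)=\Phi_{s-1}^{-1}(\gamma_s^{-1}(\phi_s(u)))$.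 *)

theory Defs
  imports "HOL-Computational_Algebra.Primes"
begin

text \<open>Conventions: an element of Z_(p^r) is a natural number below p^r; a vector in
  Z_m^n is a list of length n of naturals below m. All indices are 0-based.\<close>

definition digit :: "nat \<Rightarrow> nat \<Rightarrow> nat \<Rightarrow> nat" where
  "digit p i u = (u div p ^ i) mod p"

text \<open>Entry (i,j) of the k x p^k matrix Y_k (0-based row i < k, column j < p^k).
  Y_1 = (0 1 ... p-1); Y_(k+1) has first k rows (Y_k ... Y_k) (p copies) and last
  row (0..0,1..1,...,p-1..p-1) with blocks of length p^k.\<close>
fun Ymat :: "nat \<Rightarrow> nat \<Rightarrow> nat \<Rightarrow> nat \<Rightarrow> nat" where
  "Ymat p 0 i j = 0"
| "Ymat p (Suc 0) i j = j"
| "Ymat p (Suc (Suc k)) i j =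
     (if i < Suc k then Ymat p (Suc k) i (j mod p ^ Suc k) else j div p ^ Suc k)"

definition phi :: "nat \<Rightarrow> nat \<Rightarrow> nat \<Rightarrow> nat list" where
  "phi p r u = (if r = 1 then [u mod p] else
     map (\<lambda>j. (digit p (r - 1) u + (\<Sum>k<r - 1. digit p k u * Ymat p (r - 1) k j)) mod p)
         [0..<p ^ (r - 1)])"

definition Phi :: "nat \<Rightarrow> nat \<Rightarrow> nat list \<Rightarrow> nat list" where
  "Phi p r v = concat (map (phi p r) v)"

definition gamma :: "nat \<Rightarrow> nat \<Rightarrow> nat list \<Rightarrow> nat list" where
  "gamma p s x = map (\<lambda>k. x ! ((k mod p) * p ^ (s - 2) + k div p)) [0..<p ^ (s - 1)]"

text \<open>tau_s(u) = Phi_(s-1)^(-1)(gamma_s^(-1)(phi_s(u))): the unique v in Z_(p^(s-1))^p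
  with gamma_s(Phi_(s-1)(v)) = phi_s(u).\<close>
definition tau :: "nat \<Rightarrow> nat \<Rightarrow> nat \<Rightarrow> nat list" where
  "tau p s u = (THE v. length v = p \<and> (\<forall>x\<in>set v. x < p ^ (s - 1)) \<and>
                       gamma p s (Phi p (s - 1) v) = phi p s u)"

definition vadd :: "nat \<Rightarrow> nat list \<Rightarrow> nat list \<Rightarrow> nat list" where
  "vadd m v w = map2 (\<lambda>a b. (a + b) mod m) v w"

definition vsum :: "nat \<Rightarrow> nat \<Rightarrow> nat list list \<Rightarrow> nat list" where
  "vsum n m vs = foldr (vadd m) vs (replicate n 0)"

end

theory Submission
  imports Defs "HOL-Number_Theory.Cong"
begin

text \<open>
  Writing j_k for the p-ary digits of j, the matrix Y_(r-1) has entries j_k, so that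
  phi_r(u)_j = u_(r-1) + \<Sum>_(k<r-1) u_k j_k (mod p). Evaluating at j = 0 and at j = p^k recovers
  every digit of u, so phi_r is injective on Z_(p^r); comparing coordinates then shows that tau_s
  has the closed form tau_s(u)_a = (u div p + u_0 a p^(s-2)) mod p^(s-1).
  For u = \<Sum>_i \<lambda>_i p^i every summand but the first is divisible by p, so u div p and u mod p
  are the sums of the corresponding quantities of the summands. Hence the closed form is additive
  over the summands, \<Sum>_i tau_s(\<lambda>_i p^i) = tau_s(u), and gamma_s(Phi_(s-1)(tau_s(u))) = phi_s(u)
  by the defining property of tau_s.
\<close>

lemma digit_less: "p > 0 \<Longrightarrow> digit p k u < p"
  by (simp add: digit_def)

lemma digit_0: "digit p 0 u = u mod p"
  by (simp add: digit_def)

lemma digit_Suc: "digit p (Suc k) u = digit p k (u div p)"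
  by (simp add: digit_def div_mult2_eq mult.commute)

lemma digit_add_mult_Suc:
  "a < p \<Longrightarrow> digit p (Suc k) (a + b * p) = digit p k b"
  by (simp add: digit_Suc)

lemma digit_mod_power:
  assumes "p > 0" "k < n"
  shows "digit p k (u mod p ^ n) = digit p k u"
proof -
  have split: "p ^ n = p ^ k * p ^ (n - k)"
    using assms by (simp flip: power_add)
  have "u mod p ^ n div p ^ k = u div p ^ k mod p ^ (n - k)"
    unfolding split mod_mult2_eq using assms by simp
  moreover have "p dvd p ^ (n - k)"
    using assms by simp
  ultimately show ?thesis
    by (simp add: digit_def mod_mod_cancel)
qed

lemma digit_add_mult_power_low:
  assumes "p > 0" "k < n"
  shows "digit p k (u + c * p ^ n) = digit p k u"
  using digit_mod_power[OF assms, where u = "u + c * p ^ n"] digit_mod_power[OF assms, where u = u]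
  by simp

lemma digit_add_mult_power:
  "p > 0 \<Longrightarrow> digit p n (u + c * p ^ n) = (digit p n u + c) mod p"
  by (simp add: digit_def mod_add_right_eq add.commute)

lemma digit_power:
  assumes "p \<ge> 2"
  shows "digit p k (p ^ n) = (if k = n then 1 else 0)"
proof (cases k n rule: linorder_cases)
  case less
  then show ?thesis
    using assms digit_add_mult_power_low[of p k n 0 1] by (simp add: digit_def)
next
  case equal
  then show ?thesis
    using assms by (simp add: digit_def)
next
  case greater
  then have "p ^ n < p ^ k"
    using assms by (simp add: power_strict_increasing)
  then show ?thesis
    using greater by (simp add: digit_def)
qed

lemma digits_eq_imp_eq:
  assumes "p > 0" "u < p ^ r" "v < p ^ r" "\<And>k. k < r \<Longrightarrow> digit p k u = digit p k v"
  shows "u = v"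
  using assms(2-)
proof (induction r arbitrary: u v)
  case 0
  then show ?case by simp
next
  case (Suc r)
  have "u div p = v div p"
    using Suc.prems Suc.IH[of "u div p" "v div p"]
    by (simp add: less_mult_imp_div_less mult.commute flip: digit_Suc)
  moreover have "u mod p = v mod p"
    using Suc.prems(3)[of 0] by (simp add: digit_0)
  ultimately show ?case
    by (metis div_mult_mod_eq)
qed

lemma add_mult_less_mult:
  fixes a b p q :: nat
  assumes "a < p" "b < q"
  shows "a + b * p < q * p"
proof -
  have "a + b * p < Suc b * p"
    using assms(1) by simp
  also have "\<dots> \<le> q * p"
    using assms(2) by (intro mult_right_mono) simp_all
  finally show ?thesis .
qed

lemma Ymat_eq_digit:
  assumes "p > 0" "r \<ge> 1" "i < r" "j < p ^ r"
  shows "Ymat p r i j = digit p i j"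
  using assms
proof (induction p r i j rule: Ymat.induct)
  case (1 p i j)
  then show ?case by simp
next
  case (2 p i j)
  then show ?case by (simp add: digit_def)
next
  case (3 p k i j)
  show ?case
  proof (cases "i < Suc k")
    case True
    then show ?thesis
      using 3 digit_mod_power[of p i "Suc k" j] by simp
  next
    case False
    then have "i = Suc k"
      using "3.prems" by simp
    moreover have "j div p ^ Suc k < p"
      using "3.prems" by (simp add: div_less_iff_less_mult mult.commute)
    ultimately show ?thesis
      by (simp add: digit_def)
  qed
qed

lemma length_phi: "r \<ge> 1 \<Longrightarrow> length (phi p r u) = p ^ (r - 1)"
  by (simp add: phi_def)

lemma nth_phi:
  assumes "p > 0" "r \<ge> 1" "j < p ^ (r - 1)"
  shows "phi p r u ! j = (digit p (r - 1) u + (\<Sum>k<r - 1. digit p k u * digit p k j)) mod p"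
proof (cases "r = 1")
  case True
  then show ?thesis
    using assms by (simp add: phi_def digit_def)
next
  case False
  then have "(\<Sum>k<r - 1. digit p k u * Ymat p (r - 1) k j) = (\<Sum>k<r - 1. digit p k u * digit p k j)"
    using assms by (intro sum.cong refl) (simp add: Ymat_eq_digit)
  then show ?thesis
    using False assms by (simp add: phi_def)
qed

lemma nth_phi_0:
  assumes "p > 0" "r \<ge> 1"
  shows "phi p r u ! 0 = digit p (r - 1) u"
  using assms nth_phi[of p r 0 u] by (simp add: digit_def digit_less)

lemma nth_phi_power:
  assumes "p \<ge> 2" "k < r - 1"
  shows "phi p r u ! (p ^ k) = (digit p (r - 1) u + digit p k u) mod p"
proof -
  have "(\<Sum>i<r - 1. digit p i u * digit p i (p ^ k)) = (\<Sum>i<r - 1. if i = k then digit p k u else 0)"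
    using assms by (intro sum.cong refl) (simp add: digit_power)
  also have "\<dots> = digit p k u"
    using assms by simp
  finally show ?thesis
    using assms nth_phi[of p r "p ^ k" u] by (simp add: power_strict_increasing)
qed

lemma inj_on_phi:
  assumes "p \<ge> 2" "r \<ge> 1"
  shows "inj_on (phi p r) {..<p ^ r}"
proof (rule inj_onI)
  fix u v
  assume u: "u \<in> {..<p ^ r}" and v: "v \<in> {..<p ^ r}" and eq: "phi p r u = phi p r v"
  have top: "digit p (r - 1) u = digit p (r - 1) v"
    using assms eq nth_phi_0[of p r u] nth_phi_0[of p r v] by simp
  show "u = v"
  proof (rule digits_eq_imp_eq[of p])
    fix k
    assume "k < r"
    show "digit p k u = digit p k v"
    proof (cases "k = r - 1")
      case False
      with \<open>k < r\<close> have "k < r - 1" by simp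
      then have "[digit p (r - 1) u + digit p k u = digit p (r - 1) u + digit p k v] (mod p)"
        using assms eq top nth_phi_power[of p k r u] nth_phi_power[of p k r v] by (simp add: cong_def)
      then show ?thesis
        using assms by (simp only: cong_add_lcancel_nat) (simp add: cong_def digit_less)
    qed (use top in simp)
  qed (use assms u v in auto)
qed

lemma nth_concat_equal_length:
  assumes "\<forall>x\<in>set xs. length (f x) = n" "a < length xs" "b < n"
  shows "concat (map f xs) ! (a * n + b) = f (xs ! a) ! b"
  using assms
proof (induction xs arbitrary: a)
  case Nil
  then show ?case by simp
next
  case (Cons x xs)
  then show ?case
    by (cases a) (simp_all add: nth_append)
qed

lemma nth_gamma_Phi:
  assumes "p > 0" "length v = p" "k < p ^ Suc m"
  shows "gamma p (Suc (Suc m)) (Phi p (Suc m) v) ! k = phi p (Suc m) (v ! (k mod p)) ! (k div p)"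
proof -
  have "k div p < p ^ m"
    using assms by (simp add: div_less_iff_less_mult mult.commute)
  then have "Phi p (Suc m) v ! (k mod p * p ^ m + k div p) = phi p (Suc m) (v ! (k mod p)) ! (k div p)"
    unfolding Phi_def using assms by (intro nth_concat_equal_length) (simp_all add: length_phi)
  then show ?thesis
    using assms by (simp add: gamma_def)
qed

lemma gamma_Phi_inj:
  assumes "p \<ge> 2" "length v = p" "length w = p"
    and "\<forall>x\<in>set v. x < p ^ Suc m" "\<forall>x\<in>set w. x < p ^ Suc m"
    and eq: "gamma p (Suc (Suc m)) (Phi p (Suc m) v) = gamma p (Suc (Suc m)) (Phi p (Suc m) w)"
  shows "v = w"
proof (rule nth_equalityI)
  show "length v = length w"
    using assms by simp
  fix a
  assume "a < length v"
  then have a: "a < p"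
    using assms by simp
  have "phi p (Suc m) (v ! a) = phi p (Suc m) (w ! a)"
  proof (rule nth_equalityI)
    show "length (phi p (Suc m) (v ! a)) = length (phi p (Suc m) (w ! a))"
      by (simp add: length_phi)
    fix b
    assume "b < length (phi p (Suc m) (v ! a))"
    then have "a + b * p < p ^ Suc m"
      using a add_mult_less_mult[of a p b "p ^ m"] by (simp add: length_phi mult.commute)
    moreover have "(a + b * p) mod p = a" "(a + b * p) div p = b"
      using a by simp_all
    ultimately show "phi p (Suc m) (v ! a) ! b = phi p (Suc m) (w ! a) ! b"
      using assms nth_gamma_Phi[of p v "a + b * p" m] nth_gamma_Phi[of p w "a + b * p" m]
      by simp
  qed
  then show "v ! a = w ! a"
    using assms a inj_on_phi[of p "Suc m"] by (simp add: inj_on_def)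
qed

definition tau_closed :: "nat \<Rightarrow> nat \<Rightarrow> nat \<Rightarrow> nat list" where
  "tau_closed p s u = map (\<lambda>a. (u div p + u mod p * a * p ^ (s - 2)) mod p ^ (s - 1)) [0..<p]"

lemma length_tau_closed: "length (tau_closed p s u) = p"
  by (simp add: tau_closed_def)

lemma nth_tau_closed:
  "a < p \<Longrightarrow> tau_closed p s u ! a = (u div p + u mod p * a * p ^ (s - 2)) mod p ^ (s - 1)"
  by (simp add: tau_closed_def)

lemma nth_phi_tau_closed:
  assumes "p > 0" "a < p" "b < p ^ m"
  shows "phi p (Suc m) (tau_closed p (Suc (Suc m)) u ! a) ! b = phi p (Suc (Suc m)) u ! (a + b * p)"
proof -
  define w where "w = (u div p + u mod p * a * p ^ m) mod p ^ Suc m"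
  have w: "tau_closed p (Suc (Suc m)) u ! a = w"
    using assms by (simp add: tau_closed_def w_def)
  have digit_w_low: "digit p k w = digit p (Suc k) u" if "k < m" for k
    using assms that digit_mod_power[of p k "Suc m"]
    by (simp add: w_def digit_add_mult_power_low digit_Suc del: power_Suc)
  have digit_w_top: "digit p m w = (digit p (Suc m) u + u mod p * a) mod p"
    using assms digit_mod_power[of p m "Suc m"]
    by (simp add: w_def digit_add_mult_power digit_Suc del: power_Suc)
  have "(\<Sum>k<Suc m. digit p k u * digit p k (a + b * p))
      = u mod p * a + (\<Sum>k<m. digit p (Suc k) u * digit p k b)"
    unfolding sum.lessThan_Suc_shift using assms by (simp add: digit_add_mult_Suc digit_0)
  then have "phi p (Suc (Suc m)) u ! (a + b * p)
      = (digit p (Suc m) u + u mod p * a + (\<Sum>k<m. digit p (Suc k) u * digit p k b)) mod p"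
    using assms add_mult_less_mult[of a p b "p ^ m"]
    by (simp add: nth_phi mult.commute add.assoc)
  also have "\<dots> = phi p (Suc m) w ! b"
    using assms by (simp add: nth_phi digit_w_low digit_w_top mod_add_left_eq)
  finally show ?thesis
    using w by simp
qed

lemma gamma_Phi_tau_closed:
  assumes "p > 0"
  shows "gamma p (Suc (Suc m)) (Phi p (Suc m) (tau_closed p (Suc (Suc m)) u)) = phi p (Suc (Suc m)) u"
proof (rule nth_equalityI)
  show "length (gamma p (Suc (Suc m)) (Phi p (Suc m) (tau_closed p (Suc (Suc m)) u)))
      = length (phi p (Suc (Suc m)) u)"
    by (simp add: gamma_def length_phi)
  fix k
  assume "k < length (gamma p (Suc (Suc m)) (Phi p (Suc m) (tau_closed p (Suc (Suc m)) u)))"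
  then have k: "k < p ^ Suc m"
    by (simp add: gamma_def)
  then have "k div p < p ^ m"
    using assms by (simp add: div_less_iff_less_mult mult.commute)
  then show "gamma p (Suc (Suc m)) (Phi p (Suc m) (tau_closed p (Suc (Suc m)) u)) ! k
      = phi p (Suc (Suc m)) u ! k"
    using assms k
    by (simp add: nth_gamma_Phi length_tau_closed nth_phi_tau_closed)
qed

lemma tau_closed_less: "p > 0 \<Longrightarrow> x \<in> set (tau_closed p s u) \<Longrightarrow> x < p ^ (s - 1)"
  by (auto simp: tau_closed_def)

lemma tau_eq_tau_closed:
  assumes "p \<ge> 2"
  shows "tau p (Suc (Suc m)) u = tau_closed p (Suc (Suc m)) u"
  unfolding tau_def diff_Suc_1
proof (rule the_equality)
  let ?T = "tau_closed p (Suc (Suc m)) u"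
  have bound: "\<forall>x\<in>set ?T. x < p ^ Suc m"
    using assms tau_closed_less[of p _ "Suc (Suc m)"] by simp
  have image: "gamma p (Suc (Suc m)) (Phi p (Suc m) ?T) = phi p (Suc (Suc m)) u"
    using assms by (intro gamma_Phi_tau_closed) simp
  show "length ?T = p \<and> (\<forall>x\<in>set ?T. x < p ^ Suc m)
      \<and> gamma p (Suc (Suc m)) (Phi p (Suc m) ?T) = phi p (Suc (Suc m)) u"
    using bound image by (simp add: length_tau_closed)
  fix v
  assume v: "length v = p \<and> (\<forall>x\<in>set v. x < p ^ Suc m)
      \<and> gamma p (Suc (Suc m)) (Phi p (Suc m) v) = phi p (Suc (Suc m)) u"
  show "v = ?T"
    by (rule gamma_Phi_inj[of p v ?T m]) (use assms v bound image in \<open>simp_all add: length_tau_closed\<close>)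
qed

lemma vsum_eq_map:
  assumes "\<forall>v\<in>set vs. length v = n"
  shows "vsum n m vs = map (\<lambda>a. (\<Sum>v\<leftarrow>vs. v ! a) mod m) [0..<n]"
  using assms
proof (induction vs)
  case Nil
  then show ?case
    by (simp add: vsum_def map_replicate_trivial)
next
  case (Cons v vs)
  then show ?case
    by (intro nth_equalityI) (simp_all add: vsum_def vadd_def mod_add_right_eq)
qed

lemma sum_mult_powers_div:
  fixes p :: nat
  shows "(\<Sum>i<n. f i * p ^ i) div p = (\<Sum>i<n. f i * p ^ i div p)"
proof (induction n)
  case (Suc n)
  then show ?case
    by (cases n) (simp_all add: div_plus_div_distrib_dvd_right)
qed simp

lemma sum_mult_powers_mod:
  fixes p :: nat
  shows "(\<Sum>i<n. f i * p ^ i) mod p = (\<Sum>i<n. f i * p ^ i mod p)"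
proof (induction n)
  case (Suc n)
  show ?case
  proof (cases "n = 0")
    case False
    then have "p dvd f n * p ^ n"
      by simp
    then show ?thesis
      using Suc.IH by auto
  qed simp
qed simp

lemma vsum_tau_closed_mult_powers:
  "vsum p (p ^ Suc m) (map (\<lambda>i. tau_closed p (Suc (Suc m)) (f i * p ^ i)) [0..<n])
    = tau_closed p (Suc (Suc m)) (\<Sum>i<n. f i * p ^ i)"
proof -
  let ?u = "\<lambda>i. f i * p ^ i"
  have "vsum p (p ^ Suc m) (map (\<lambda>i. tau_closed p (Suc (Suc m)) (?u i)) [0..<n])
      = map (\<lambda>a. (\<Sum>i<n. tau_closed p (Suc (Suc m)) (?u i) ! a) mod p ^ Suc m) [0..<p]"
    by (simp add: vsum_eq_map length_tau_closed interv_sum_list_conv_sum_set_nat atLeast0LessThan)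
  also have "\<dots> = map (\<lambda>a. (\<Sum>i<n. ?u i div p + ?u i mod p * a * p ^ m) mod p ^ Suc m) [0..<p]"
    by (intro map_cong refl) (simp add: nth_tau_closed mod_sum_eq)
  also have "\<dots> = map (\<lambda>a. ((\<Sum>i<n. ?u i) div p + (\<Sum>i<n. ?u i) mod p * a * p ^ m) mod p ^ Suc m) [0..<p]"
    by (simp only: sum_mult_powers_div sum_mult_powers_mod sum.distrib sum_distrib_right)
  also have "\<dots> = tau_closed p (Suc (Suc m)) (\<Sum>i<n. ?u i)"
    by (simp add: tau_closed_def)
  finally show ?thesis .
qed

theorem proposition1:
  fixes p s :: nat and lam :: "nat \<Rightarrow> nat"
  assumes "prime p" and "s \<ge> 2" and "\<forall>i<s. lam i < p"
  shows "phi p s (\<Sum>i<s. lam i * p ^ i) =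
         gamma p s (Phi p (s - 1) (vsum p (p ^ (s - 1)) (map (\<lambda>i. tau p s (lam i * p ^ i)) [0..<s])))"
proof -
  have "p \<ge> 2"
    using \<open>prime p\<close> by (rule prime_ge_2_nat)
  then have "p > 0"
    by simp
  obtain m where s: "s = Suc (Suc m)"
    using \<open>s \<ge> 2\<close> by (metis add_2_eq_Suc le_Suc_ex)
  have "map (\<lambda>i. tau p s (lam i * p ^ i)) [0..<s] = map (\<lambda>i. tau_closed p s (lam i * p ^ i)) [0..<s]"
    using \<open>p \<ge> 2\<close> unfolding s by (simp only: tau_eq_tau_closed)
  then have "vsum p (p ^ (s - 1)) (map (\<lambda>i. tau p s (lam i * p ^ i)) [0..<s])
      = tau_closed p s (\<Sum>i<s. lam i * p ^ i)"
    unfolding s diff_Suc_1 by (simp only: vsum_tau_closed_mult_powers)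
  then show ?thesis
    using \<open>p > 0\<close> unfolding s diff_Suc_1 by (simp only: gamma_Phi_tau_closed)
qed

end
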